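(* Let $X,Y$ be finite nonempty sets, $A\in\{0,1\}^{X\times Y}$, $\delta,\epsilon>0$, integers $k,\ell\ge1$, and assume $\|A\|_{U(k,\ell)}\ge(1+\epsilon)\delta$. Then at least one of the following holds: (1) $|\{x\in X:\deg_A(x)\ge\delta\}|\ge\frac{\epsilon}{2}\delta^{k\ell}|X|$; (2) $k>1$ and there is $x\in X$ with $\deg_A(x)\ge\delta^k$ and $\|A_x\|_{U(k-1,\ell)}\ge(1+\epsilon)\delta$.
   Context: $\deg_A(x)=\frac{1}{|Y|}\sum_{y\in Y}A(x,y)$. $Y_x=\{y\in Y:A(x,y)=1\}$ and $A_x=A[X,Y_x]$ is the submatrix of $A$ with all rows and columns $Y_x$. The $(k,\ell)$-grid norm of $M\in\mathbb{R}_{\ge0}^{X\times Y'}$ is $\|M\|_{U(k,\ell)}=\big(\mathbb{E}_{x_1,\dots,x_k\in X,\,y_1,\dots,y_\ell\in Y'}\prod_{i\in[k],j\in[\ell]}M(x_i,y_j)\big)^{1/(k\ell)}$, expectations over independent uniform choices. *)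

theory Defs
  imports Complex_Main "HOL-Library.FuncSet"
begin

definition deg :: "'y set \<Rightarrow> ('x \<Rightarrow> 'y \<Rightarrow> real) \<Rightarrow> 'x \<Rightarrow> real" where
  "deg Y A x = (1 / real (card Y)) * (\<Sum>y\<in>Y. A x y)"

definition nbhd :: "'y set \<Rightarrow> ('x \<Rightarrow> 'y \<Rightarrow> real) \<Rightarrow> 'x \<Rightarrow> 'y set" where
  "nbhd Y A x = {y \<in> Y. A x y = 1}"

definition grid_norm :: "'x set \<Rightarrow> 'y set \<Rightarrow> ('x \<Rightarrow> 'y \<Rightarrow> real) \<Rightarrow> nat \<Rightarrow> nat \<Rightarrow> real" where
  "grid_norm X Y' M k l =
     ((\<Sum>xs\<in>{0..<k} \<rightarrow>\<^sub>E X. \<Sum>ys\<in>{0..<l} \<rightarrow>\<^sub>E Y'.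
         \<Prod>i\<in>{0..<k}. \<Prod>j\<in>{0..<l}. M (xs i) (ys j))
      / (real (card X) ^ k * real (card Y') ^ l)) powr (1 / real (k * l))"

end

theory Submission
  imports Defs
begin

text \<open>Summing first over the column tuple, the (k+1,l)-grid count of a 0/1 matrix splits along the
  rows: the rows x_1,...,x_k of a grid whose first row is x only see the columns in Y_x. Averaging,
  \<open>\<parallel>A\<parallel>^((k+1)l)\<close> is the mean over x of \<open>deg(x)^l \<parallel>A_x\<parallel>^(kl)\<close>. If (2) fails, every row outside
  G = {x. deg(x) \<ge> \<delta>} contributes at most \<open>\<delta>^l ((1+\<epsilon>)\<delta>)^(kl)\<close>, while rows in G contribute at
  most 1; comparing with the lower bound \<open>((1+\<epsilon>)\<delta>)^((k+1)l)\<close> forces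
  \<open>|G| \<ge> \<epsilon> \<delta>^((k+1)l) |X|\<close>.\<close>

definition grid_count :: "'x set \<Rightarrow> 'y set \<Rightarrow> ('x \<Rightarrow> 'y \<Rightarrow> real) \<Rightarrow> nat \<Rightarrow> nat \<Rightarrow> real" where
  "grid_count X Y' M k l = (\<Sum>ys\<in>{0..<l} \<rightarrow>\<^sub>E Y'. (\<Sum>x\<in>X. \<Prod>j\<in>{0..<l}. M x (ys j)) ^ k)"

definition grid_density :: "'x set \<Rightarrow> 'y set \<Rightarrow> ('x \<Rightarrow> 'y \<Rightarrow> real) \<Rightarrow> nat \<Rightarrow> nat \<Rightarrow> real" where
  "grid_density X Y' M k l = grid_count X Y' M k l / (real (card X) ^ k * real (card Y') ^ l)"

lemma grid_sum_eq_grid_count: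
  assumes "finite X"
  shows "(\<Sum>xs\<in>{0..<k} \<rightarrow>\<^sub>E X. \<Sum>ys\<in>{0..<l} \<rightarrow>\<^sub>E Y'.
            \<Prod>i\<in>{0..<k}. \<Prod>j\<in>{0..<l}. M (xs i) (ys j)) = grid_count X Y' M k l"
proof -
  have "(\<Sum>xs\<in>{0..<k} \<rightarrow>\<^sub>E X. \<Prod>i\<in>{0..<k}. \<Prod>j\<in>{0..<l}. M (xs i) (ys j))
      = (\<Sum>x\<in>X. \<Prod>j\<in>{0..<l}. M x (ys j)) ^ k" for ys
    using prod_sum_PiE[of "{0..<k}" "\<lambda>_. X" "\<lambda>_ x. \<Prod>j\<in>{0..<l}. M x (ys j)"] assms by simp
  then show ?thesis
    unfolding grid_count_def by (subst sum.swap) simp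
qed

lemma grid_norm_eq_density_powr:
  assumes "finite X"
  shows "grid_norm X Y' M k l = grid_density X Y' M k l powr (1 / real (k * l))"
  unfolding grid_norm_def grid_density_def grid_sum_eq_grid_count[OF assms] ..

lemma grid_count_bounds:
  assumes "finite X" "finite Y'" "\<forall>x\<in>X. \<forall>y\<in>Y'. 0 \<le> M x y \<and> M x y \<le> 1"
  shows "0 \<le> grid_count X Y' M k l" "grid_count X Y' M k l \<le> real (card X) ^ k * real (card Y') ^ l"
proof -
  have row: "0 \<le> (\<Sum>x\<in>X. \<Prod>j\<in>{0..<l}. M x (ys j)) \<and> (\<Sum>x\<in>X. \<Prod>j\<in>{0..<l}. M x (ys j)) \<le> real (card X)"
    if "ys \<in> {0..<l} \<rightarrow>\<^sub>E Y'" for ys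
  proof -
    have "0 \<le> (\<Prod>j\<in>{0..<l}. M x (ys j)) \<and> (\<Prod>j\<in>{0..<l}. M x (ys j)) \<le> 1" if "x \<in> X" for x
      using \<open>ys \<in> _\<close> that assms(3) by (auto intro!: prod_nonneg prod_le_1)
    then show ?thesis
      using sum_mono[of X "\<lambda>x. \<Prod>j\<in>{0..<l}. M x (ys j)" "\<lambda>_. 1"] by (simp add: sum_nonneg)
  qed
  show "0 \<le> grid_count X Y' M k l"
    unfolding grid_count_def using row by (simp add: sum_nonneg)
  have "grid_count X Y' M k l \<le> (\<Sum>ys\<in>{0..<l} \<rightarrow>\<^sub>E Y'. real (card X) ^ k)"
    unfolding grid_count_def using row by (intro sum_mono power_mono) auto
  also have "\<dots> = real (card X) ^ k * real (card Y') ^ l"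
    using assms by (simp add: card_PiE)
  finally show "grid_count X Y' M k l \<le> real (card X) ^ k * real (card Y') ^ l" .
qed

lemma grid_density_bounds:
  assumes "finite X" "finite Y'" "\<forall>x\<in>X. \<forall>y\<in>Y'. 0 \<le> M x y \<and> M x y \<le> 1"
  shows "0 \<le> grid_density X Y' M k l" "grid_density X Y' M k l \<le> 1"
proof -
  let ?N = "real (card X) ^ k * real (card Y') ^ l"
  note count = grid_count_bounds[OF assms, of k l]
  then show "0 \<le> grid_density X Y' M k l"
    by (simp add: grid_density_def)
  have "grid_density X Y' M k l \<le> ?N / ?N"
    unfolding grid_density_def using count by (intro divide_right_mono) auto
  then show "grid_density X Y' M k l \<le> 1"
    by (metis div_by_0 divide_self order_trans zero_le_one)
qed

text \<open>The normaliser vanishes only for Y' = {} and l > 0, when there are no column tuples at all.\<close>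
lemma grid_count_eq_density:
  assumes "finite X" "X \<noteq> {}" "finite Y'"
  shows "grid_count X Y' M k l = real (card X) ^ k * real (card Y') ^ l * grid_density X Y' M k l"
proof (cases "Y' = {} \<and> l > 0")
  case True
  then have "{0..<l} \<rightarrow>\<^sub>E Y' = {}" by (auto simp: PiE_eq_empty_iff)
  with True show ?thesis by (simp add: grid_count_def)
next
  case False
  then show ?thesis
    using assms by (auto simp: grid_density_def card_gt_0_iff)
qed

lemma grid_count_Suc:
  assumes "finite Y" "\<forall>x\<in>X. \<forall>y\<in>Y. A x y \<in> {0, 1}"
  shows "grid_count X Y A (Suc k) l = (\<Sum>x\<in>X. grid_count X (nbhd Y A x) A k l)"
proof -
  let ?row = "\<lambda>x ys. \<Prod>j\<in>{0..<l}. A x (ys j)"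
  let ?rest = "\<lambda>ys. (\<Sum>x\<in>X. ?row x ys) ^ k"
  have "grid_count X Y A (Suc k) l = (\<Sum>x\<in>X. \<Sum>ys\<in>{0..<l} \<rightarrow>\<^sub>E Y. ?row x ys * ?rest ys)"
    unfolding grid_count_def power_Suc sum_distrib_right by (rule sum.swap)
  also have "\<dots> = (\<Sum>x\<in>X. grid_count X (nbhd Y A x) A k l)"
  proof (rule sum.cong[OF refl])
    fix x assume "x \<in> X"
    have row_indicator: "?row x ys = (if ys \<in> {0..<l} \<rightarrow>\<^sub>E nbhd Y A x then 1 else 0)"
      if ys: "ys \<in> {0..<l} \<rightarrow>\<^sub>E Y" for ys
    proof (cases "ys \<in> {0..<l} \<rightarrow>\<^sub>E nbhd Y A x")
      case True
      then show ?thesis by (auto simp: nbhd_def intro!: prod.neutral)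
    next
      case False
      then obtain j where "j < l" "ys j \<notin> nbhd Y A x"
        using ys by (auto simp: PiE_iff)
      with ys \<open>x \<in> X\<close> assms(2) have "A x (ys j) = 0"
        by (force simp: nbhd_def PiE_iff)
      with \<open>j < l\<close> False show ?thesis by (auto intro: prod_zero)
    qed
    have "(\<Sum>ys\<in>{0..<l} \<rightarrow>\<^sub>E Y. ?row x ys * ?rest ys)
        = (\<Sum>ys\<in>{0..<l} \<rightarrow>\<^sub>E Y. if ys \<in> {0..<l} \<rightarrow>\<^sub>E nbhd Y A x then ?rest ys else 0)"
      by (intro sum.cong) (simp_all add: row_indicator)
    also have "\<dots> = (\<Sum>ys\<in>({0..<l} \<rightarrow>\<^sub>E Y) \<inter> ({0..<l} \<rightarrow>\<^sub>E nbhd Y A x). ?rest ys)"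
      using assms(1) by (simp add: sum.inter_restrict finite_PiE)
    also have "({0..<l} \<rightarrow>\<^sub>E Y) \<inter> ({0..<l} \<rightarrow>\<^sub>E nbhd Y A x) = {0..<l} \<rightarrow>\<^sub>E nbhd Y A x"
      by (intro Int_absorb1 PiE_mono) (auto simp: nbhd_def)
    finally show "(\<Sum>ys\<in>{0..<l} \<rightarrow>\<^sub>E Y. ?row x ys * ?rest ys) = grid_count X (nbhd Y A x) A k l"
      unfolding grid_count_def .
  qed
  finally show ?thesis .
qed

lemma deg_eq_card_nbhd:
  assumes "finite Y" "\<forall>y\<in>Y. A x y \<in> {0, 1}"
  shows "deg Y A x = real (card (nbhd Y A x)) / real (card Y)"
proof -
  have "(\<Sum>y\<in>Y. A x y) = (\<Sum>y\<in>Y. if A x y = 1 then 1 else 0)"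
    using assms by (intro sum.cong) auto
  also have "\<dots> = real (card (nbhd Y A x))"
    using assms(1) by (simp add: sum.If_cases nbhd_def Int_def conj_commute)
  finally show ?thesis by (simp add: deg_def)
qed

lemma deg_bounds:
  assumes "finite Y" "\<forall>y\<in>Y. A x y \<in> {0, 1}"
  shows "0 \<le> deg Y A x" "deg Y A x \<le> 1"
proof -
  have "card (nbhd Y A x) \<le> card Y"
    using assms(1) by (intro card_mono) (auto simp: nbhd_def)
  then show "0 \<le> deg Y A x" "deg Y A x \<le> 1"
    using deg_eq_card_nbhd[of Y A x, OF assms] by (auto simp: divide_le_eq_1)
qed

lemma grid_density_Suc:
  assumes "finite X" "X \<noteq> {}" "finite Y" "\<forall>x\<in>X. \<forall>y\<in>Y. A x y \<in> {0, 1}"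
  shows "grid_density X Y A (Suc k) l
       = (\<Sum>x\<in>X. deg Y A x ^ l * grid_density X (nbhd Y A x) A k l) / real (card X)"
proof -
  let ?n = "real (card X)" and ?m = "real (card Y)"
  have "finite (nbhd Y A x)" for x
    using assms(3) by (simp add: nbhd_def)
  then have "grid_count X Y A (Suc k) l
      = (\<Sum>x\<in>X. ?n ^ k * real (card (nbhd Y A x)) ^ l * grid_density X (nbhd Y A x) A k l)"
    unfolding grid_count_Suc[OF assms(3,4)] by (intro sum.cong grid_count_eq_density assms refl)
  then have "grid_density X Y A (Suc k) l
      = (\<Sum>x\<in>X. ?n ^ k * real (card (nbhd Y A x)) ^ l * grid_density X (nbhd Y A x) A k l
                   / (?n ^ Suc k * ?m ^ l))"
    by (simp add: grid_density_def sum_divide_distrib)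
  also have "\<dots> = (\<Sum>x\<in>X. deg Y A x ^ l * grid_density X (nbhd Y A x) A k l / ?n)"
  proof (rule sum.cong[OF refl])
    fix x assume "x \<in> X"
    then have "deg Y A x ^ l = real (card (nbhd Y A x)) ^ l / ?m ^ l"
      using deg_eq_card_nbhd[OF assms(3), of A x] assms(4) by (simp add: power_divide)
    moreover have "?n > 0" using assms(1,2) by (simp add: card_gt_0_iff)
    ultimately show "?n ^ k * real (card (nbhd Y A x)) ^ l * grid_density X (nbhd Y A x) A k l
        / (?n ^ Suc k * ?m ^ l) = deg Y A x ^ l * grid_density X (nbhd Y A x) A k l / ?n"
      by simp
  qed
  finally show ?thesis
    by (simp add: sum_divide_distrib)
qed

lemma le_powr_inverse_iff_power_le:
  fixes c d :: real
  assumes "0 \<le> c" "0 \<le> d" "n > 0"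
  shows "c \<le> d powr (1 / real n) \<longleftrightarrow> c ^ n \<le> d"
proof -
  have "(d powr (1 / real n)) ^ n = d"
    using assms by (cases "d = 0") (simp_all add: powr_realpow[symmetric] powr_powr)
  then show ?thesis
    using power_mono_iff[of c "d powr (1 / real n)" n] assms by simp
qed

lemma le_grid_norm_iff_power_le_density:
  assumes "finite X" "finite Y'" "\<forall>x\<in>X. \<forall>y\<in>Y'. 0 \<le> M x y \<and> M x y \<le> 1"
    and "0 \<le> c" "k * l > 0"
  shows "c \<le> grid_norm X Y' M k l \<longleftrightarrow> c ^ (k * l) \<le> grid_density X Y' M k l"
  unfolding grid_norm_eq_density_powr[OF assms(1)]
  using le_powr_inverse_iff_power_le grid_density_bounds(1)[OF assms(1-3)] assms(4,5) by blast

lemma card_ge_of_average_ge: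
  fixes f :: "'a \<Rightarrow> real"
  assumes "finite X" "\<And>x. x \<in> X \<Longrightarrow> f x \<le> (if P x then 1 else 0) + D"
    and "a \<le> (\<Sum>x\<in>X. f x) / real (card X)"
  shows "(a - D) * real (card X) \<le> real (card {x\<in>X. P x})"
proof (cases "X = {}")
  case False
  then have "0 < real (card X)" using assms(1) by (simp add: card_gt_0_iff)
  have "(\<Sum>x\<in>X. f x) \<le> (\<Sum>x\<in>X. (if P x then 1 else 0) + D)"
    using assms(2) by (rule sum_mono)
  also have "\<dots> = real (card {x\<in>X. P x}) + D * real (card X)"
    by (simp add: sum.distrib sum.inter_filter[OF assms(1), symmetric])
  finally show ?thesis
    using assms(3) \<open>0 < real (card X)\<close> by (simp add: pos_le_divide_eq algebra_simps)
qed simp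

lemma row_contribution_le:
  fixes d \<rho> \<delta> c :: real
  assumes "0 \<le> d" "d \<le> 1" "0 \<le> \<rho>" "\<rho> \<le> 1" "0 \<le> \<delta>" "\<delta> \<le> c"
    and "d < \<delta> \<Longrightarrow> d < \<delta> ^ Suc k \<or> \<rho> \<le> c ^ (k * l)"
  shows "d ^ l * \<rho> \<le> (if \<delta> \<le> d then 1 else 0) + \<delta> ^ l * c ^ (k * l)"
proof (cases "\<delta> \<le> d")
  case True
  have "d ^ l * \<rho> \<le> 1" using assms by (simp add: mult_le_one power_le_one)
  moreover have "0 \<le> \<delta> ^ l * c ^ (k * l)" using assms by simp
  ultimately show ?thesis using True by simp
next
  case False
  from assms(7) False have "d < \<delta> ^ Suc k \<or> \<rho> \<le> c ^ (k * l)" by simp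
  then have "d ^ l * \<rho> \<le> \<delta> ^ l * c ^ (k * l)"
  proof
    assume "d < \<delta> ^ Suc k"
    have "d ^ l * \<rho> \<le> d ^ l"
      using assms by (simp add: mult_left_le)
    also have "\<dots> \<le> (\<delta> ^ Suc k) ^ l"
      using \<open>d < \<delta> ^ Suc k\<close> assms by (intro power_mono) auto
    also have "\<dots> = \<delta> ^ l * \<delta> ^ (k * l)"
      by (simp add: power_mult_distrib power_mult)
    also have "\<dots> \<le> \<delta> ^ l * c ^ (k * l)"
      using assms by (intro mult_left_mono power_mono) auto
    finally show ?thesis .
  next
    assume "\<rho> \<le> c ^ (k * l)"
    with False assms show ?thesis by (intro mult_mono power_mono) auto
  qed
  with False show ?thesis by simp
qed

lemma deg_power_mul_grid_density_le:
  assumes "finite X" "finite Y" "\<forall>x\<in>X. \<forall>y\<in>Y. A x y \<in> {0, 1}" "x \<in> X"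
    and "0 \<le> \<delta>" "\<delta> \<le> c" "l > 0"
    and "k > 0 \<Longrightarrow> \<delta> ^ Suc k \<le> deg Y A x \<Longrightarrow> grid_norm X (nbhd Y A x) A k l < c"
  shows "deg Y A x ^ l * grid_density X (nbhd Y A x) A k l
       \<le> (if \<delta> \<le> deg Y A x then 1 else 0) + \<delta> ^ l * c ^ (k * l)"
proof -
  let ?\<rho> = "grid_density X (nbhd Y A x) A k l"
  have "finite (nbhd Y A x)" "\<forall>x'\<in>X. \<forall>y\<in>nbhd Y A x. 0 \<le> A x' y \<and> A x' y \<le> 1"
    using assms(2,3) by (force simp: nbhd_def)+
  note density = grid_density_bounds[OF assms(1) this] le_grid_norm_iff_power_le_density[OF assms(1) this]
  have "deg Y A x < \<delta> ^ Suc k \<or> ?\<rho> \<le> c ^ (k * l)"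
  proof (cases "k = 0")
    case False
    with assms(5-8) density(3)[of c] show ?thesis by force
  qed (use density in simp)
  then show ?thesis
    using deg_bounds[of Y A x] assms(2-6) density(1,2) by (intro row_contribution_le) auto
qed

lemma power_gap_ge:
  fixes \<delta> \<epsilon> :: real
  assumes "0 < \<delta>" "0 < \<epsilon>" "l \<ge> 1"
  shows "\<epsilon> * \<delta> ^ (Suc k * l) \<le> ((1 + \<epsilon>) * \<delta>) ^ (Suc k * l) - \<delta> ^ l * ((1 + \<epsilon>) * \<delta>) ^ (k * l)"
proof -
  have "1 + \<epsilon> \<le> 1 + real l * \<epsilon>" using assms by simp
  also have "\<dots> \<le> (1 + \<epsilon>) ^ l" using assms by (intro Bernoulli_inequality) simp
  finally have "\<epsilon> \<le> (1 + \<epsilon>) ^ l - 1" by simp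
  moreover have "1 \<le> (1 + \<epsilon>) ^ (k * l)" using assms by simp
  ultimately have "\<epsilon> \<le> (1 + \<epsilon>) ^ (k * l) * ((1 + \<epsilon>) ^ l - 1)"
    by (metis mult_mono' mult_1 assms(2) less_imp_le zero_le_one)
  then have "\<delta> ^ (Suc k * l) * \<epsilon> \<le> \<delta> ^ (Suc k * l) * ((1 + \<epsilon>) ^ (k * l) * ((1 + \<epsilon>) ^ l - 1))"
    using assms by (intro mult_left_mono) auto
  then show ?thesis
    unfolding power_mult_distrib by (simp add: power_add algebra_simps)
qed

theorem lemma4p2:
  fixes X :: "'x set" and Y :: "'y set" and A :: "'x \<Rightarrow> 'y \<Rightarrow> real"
    and \<delta> \<epsilon> :: real and k l :: nat
  assumes "finite X" "X \<noteq> {}" "finite Y" "Y \<noteq> {}"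
    and "\<forall>x\<in>X. \<forall>y\<in>Y. A x y \<in> {0, 1}"
    and "\<delta> > 0" "\<epsilon> > 0" "k \<ge> 1" "l \<ge> 1"
    and "grid_norm X Y A k l \<ge> (1 + \<epsilon>) * \<delta>"
  shows "real (card {x\<in>X. deg Y A x \<ge> \<delta>}) \<ge> \<epsilon> / 2 * \<delta> ^ (k * l) * real (card X)
      \<or> (k > 1 \<and> (\<exists>x\<in>X. deg Y A x \<ge> \<delta> ^ k \<and>
              grid_norm X (nbhd Y A x) A (k - 1) l \<ge> (1 + \<epsilon>) * \<delta>))"
proof (rule disjCI)
  assume no_dense_row: "\<not> (k > 1 \<and> (\<exists>x\<in>X. deg Y A x \<ge> \<delta> ^ k \<and>
              grid_norm X (nbhd Y A x) A (k - 1) l \<ge> (1 + \<epsilon>) * \<delta>))"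
  obtain k' where k: "k = Suc k'" using assms(8) by (cases k) auto
  define c where "c = (1 + \<epsilon>) * \<delta>"
  have row_bound: "deg Y A x ^ l * grid_density X (nbhd Y A x) A k' l
      \<le> (if \<delta> \<le> deg Y A x then 1 else 0) + \<delta> ^ l * c ^ (k' * l)" if "x \<in> X" for x
    using no_dense_row that k assms(6,7,9)
    by (intro deg_power_mul_grid_density_le[OF assms(1,3,5) that]) (auto simp: c_def)
  have "c ^ (k * l) \<le> grid_density X Y A k l"
    using le_grid_norm_iff_power_le_density[OF assms(1,3), of A c k l] assms by (force simp: c_def)
  also have "\<dots> = (\<Sum>x\<in>X. deg Y A x ^ l * grid_density X (nbhd Y A x) A k' l) / real (card X)"
    unfolding k by (rule grid_density_Suc[OF assms(1-3,5)])
  finally have "(c ^ (k * l) - \<delta> ^ l * c ^ (k' * l)) * real (card X) \<le> real (card {x\<in>X. \<delta> \<le> deg Y A x})"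
    using assms(1) row_bound by (intro card_ge_of_average_ge)
  moreover have "\<epsilon> / 2 * \<delta> ^ (k * l) \<le> c ^ (k * l) - \<delta> ^ l * c ^ (k' * l)"
  proof -
    have "\<epsilon> / 2 * \<delta> ^ (k * l) \<le> \<epsilon> * \<delta> ^ (k * l)" using assms(6,7) by simp
    also have "\<dots> \<le> c ^ (k * l) - \<delta> ^ l * c ^ (k' * l)"
      unfolding k c_def by (rule power_gap_ge[OF assms(6,7,9)])
    finally show ?thesis .
  qed
  ultimately show "\<epsilon> / 2 * \<delta> ^ (k * l) * real (card X) \<le> real (card {x\<in>X. \<delta> \<le> deg Y A x})"
    by (meson mult_right_mono of_nat_0_le_iff order_trans)
qed

end
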